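(* Let $T:[0,1]\to[0,1]$ be a piecewise smooth map and $\rho_1$ a noise kernel as in the context, with transfer operator $L_{T,\rho_1}=N_{\rho_1}L_T$, and suppose there is $i$ with $\|L_{T,\rho_1}^i|_V\|_{L^1\to L^1}<1$. Then there is a constant $C>0$ such that if the noise kernel $\rho_1$ is replaced by another bounded-variation noise kernel $\rho_2$, $$\|f_2-f_1\|_{L^1}\le C\,\|\rho_1-\rho_2\|_{L^1},$$ where $f_1$ is the stationary measure of $N_{\rho_1}L_T$ and $f_2$ is a stationary measure of $N_{\rho_2}L_T$.
   Context: $T$ is piecewise smooth: there is a finite partition of $[0,1]$ into intervals $P_i$ such that on each $P_i$, $T$ is monotonic and $C^2$ in the interior, and the limits of $T'$ at the endpoints exist in $\mathbb R\cup\{\pm\infty\}$. Noise kernels are functions of bounded variation with integral $1$ and bounded support. $L_T$ is the pushforward by $T$. With $\pi(x)=\min_{i\in\mathbb Z}|x-2i|$, $N_\rho f=\pi_*(\rho*\hat f)$, $\hat f$ being $f$ extended by $0$ outside $[0,1]$ and $\pi_*$ the pushforward by $\pi$. $V=\{\nu\in L^1([0,1]):\int\nu=0\}$. A stationary measure is a probability density fixed by the operator. *)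

theory Defs
  imports "HOL-Analysis.Analysis"
begin

definition C2_on :: "real set \<Rightarrow> (real \<Rightarrow> real) \<Rightarrow> bool" where
  "C2_on S T \<longleftrightarrow> (\<exists>T1 T2. (\<forall>x\<in>S. (T has_real_derivative T1 x) (at x)
        \<and> (T1 has_real_derivative T2 x) (at x)) \<and> continuous_on S T2)"

definition piecewise_smooth :: "(real \<Rightarrow> real) \<Rightarrow> bool" where
  "piecewise_smooth T \<longleftrightarrow> (\<forall>x\<in>{0..1}. T x \<in> {0..1}) \<and>
     (\<exists>(n::nat) (a::nat \<Rightarrow> real). a 0 = 0 \<and> a n = 1 \<and> (\<forall>k<n. a k < a (Suc k)) \<and>
        (\<forall>k<n. (mono_on {a k<..<a (Suc k)} T \<or> mono_on {a k<..<a (Suc k)} (\<lambda>x. - T x))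
              \<and> C2_on {a k<..<a (Suc k)} T
              \<and> (\<exists>l::ereal. ((\<lambda>x. ereal (deriv T x)) \<longlongrightarrow> l) (at_right (a k)))
              \<and> (\<exists>l::ereal. ((\<lambda>x. ereal (deriv T x)) \<longlongrightarrow> l) (at_left (a (Suc k))))))"

definition bounded_variation :: "(real \<Rightarrow> real) \<Rightarrow> bool" where
  "bounded_variation \<rho> \<longleftrightarrow> (\<exists>B. \<forall>(n::nat) (xs::nat \<Rightarrow> real).
      (\<forall>k<n. xs k \<le> xs (Suc k)) \<longrightarrow> (\<Sum>k<n. \<bar>\<rho> (xs (Suc k)) - \<rho> (xs k)\<bar>) \<le> B)"

definition noise_kernel :: "(real \<Rightarrow> real) \<Rightarrow> bool" where
  "noise_kernel \<rho> \<longleftrightarrow> bounded_variation \<rho> \<and> integral\<^sup>L lborel \<rho> = 1 \<and>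
      (\<exists>R. \<forall>x. \<bar>x\<bar> > R \<longrightarrow> \<rho> x = 0)"

(* density of rho * (T_* (f dx restricted to [0,1])) on the real line *)
definition conv_push :: "(real \<Rightarrow> real) \<Rightarrow> (real \<Rightarrow> real) \<Rightarrow> (real \<Rightarrow> real) \<Rightarrow> real \<Rightarrow> real" where
  "conv_push \<rho> T f z = (LINT y:{0..1}|lborel. \<rho> (z - T y) * f y)"

(* L_{T,rho} f = N_rho L_T f = pi_*(rho * hat(L_T f)), pi(x) = dist(x, 2Z):
   the pushforward density under pi at x in [0,1] is the sum over the preimages 2i+x, 2i-x *)
definition transfer :: "(real \<Rightarrow> real) \<Rightarrow> (real \<Rightarrow> real) \<Rightarrow> (real \<Rightarrow> real) \<Rightarrow> real \<Rightarrow> real" where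
  "transfer \<rho> T f x = (if x \<in> {0..1} then
      (\<Sum>\<^sub>\<infinity>i::int. conv_push \<rho> T f (2 * of_int i + x) + conv_push \<rho> T f (2 * of_int i - x))
    else 0)"

definition L1norm :: "(real \<Rightarrow> real) \<Rightarrow> real" where
  "L1norm f = (LINT x:{0..1}|lborel. \<bar>f x\<bar>)"

definition in_V :: "(real \<Rightarrow> real) \<Rightarrow> bool" where
  "in_V \<nu> \<longleftrightarrow> set_integrable lborel {0..1} \<nu> \<and> (LINT x:{0..1}|lborel. \<nu> x) = 0"

definition stationary :: "(real \<Rightarrow> real) \<Rightarrow> (real \<Rightarrow> real) \<Rightarrow> (real \<Rightarrow> real) \<Rightarrow> bool" where
  "stationary \<rho> T f \<longleftrightarrow> set_integrable lborel {0..1} f \<and>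
     (AE x in lborel. x \<in> {0..1} \<longrightarrow> f x \<ge> 0) \<and> (LINT x:{0..1}|lborel. f x) = 1 \<and>
     (AE x in lborel. x \<in> {0..1} \<longrightarrow> transfer \<rho> T f x = f x)"

end

theory Submission
  imports Defs
begin

text \<open>Write \<open>A\<^sub>\<rho>\<close> for the transfer operator with kernel \<open>\<rho>\<close>. The difference
  \<open>h = f\<^sub>2 - f\<^sub>1\<close> of the stationary densities satisfies
  \<open>h = A\<^sub>\<rho>\<^sub>1 h + (A\<^sub>\<rho>\<^sub>2 - A\<^sub>\<rho>\<^sub>1) f\<^sub>2\<close>, and iterating this \<open>i\<close> times gives
  \<open>h = A\<^sub>\<rho>\<^sub>1\<^sup>i h + \<Sum>\<^sub>j\<^sub><\<^sub>i A\<^sub>\<rho>\<^sub>1\<^sup>j (A\<^sub>\<rho>\<^sub>2 - A\<^sub>\<rho>\<^sub>1) f\<^sub>2\<close>. Since \<open>h\<close> has integral zero, the first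
  term has norm at most \<open>c \<parallel>h\<parallel>\<close>; since \<open>A\<^sub>\<rho>\<close> is linear in \<open>\<rho>\<close> with norm at most
  \<open>2 \<parallel>\<rho>\<parallel>\<^sub>1\<close> and \<open>\<parallel>f\<^sub>2\<parallel> = 1\<close>, the sum has norm at most
  \<open>2 (\<Sum>\<^sub>j\<^sub><\<^sub>i (2 \<parallel>\<rho>\<^sub>1\<parallel>\<^sub>1)\<^sup>j) \<parallel>\<rho>\<^sub>1 - \<rho>\<^sub>2\<parallel>\<^sub>1\<close>. Solving for \<open>\<parallel>h\<parallel>\<close> gives the constant.\<close>

definition bounded_kernel :: "(real \<Rightarrow> real) \<Rightarrow> bool" where
  "bounded_kernel k \<longleftrightarrow> k \<in> borel_measurable borel \<and> (\<exists>B. \<forall>x. \<bar>k x\<bar> \<le> B) \<and>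
     (\<exists>R. \<forall>x. \<bar>x\<bar> > R \<longrightarrow> k x = 0)"

definition zero_ext :: "(real \<Rightarrow> real) \<Rightarrow> real \<Rightarrow> real" where
  "zero_ext f x = indicator {0..1} x * f x"

definition push_conv :: "(real \<Rightarrow> real) \<Rightarrow> (real \<Rightarrow> real) \<Rightarrow> (real \<Rightarrow> real) \<Rightarrow> real \<Rightarrow> real" where
  "push_conv Tr k H z = (\<integral>y. k (z - Tr y) * H y \<partial>lborel)"

text \<open>The sum over \<open>\<int>\<close> in \<open>transfer\<close>, truncated to a finite index set \<open>S\<close>; for kernels
  of compact support only finitely many terms are nonzero.\<close>
definition fold_transfer ::
    "(real \<Rightarrow> real) \<Rightarrow> int set \<Rightarrow> (real \<Rightarrow> real) \<Rightarrow> (real \<Rightarrow> real) \<Rightarrow> real \<Rightarrow> real" where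
  "fold_transfer Tr S k H x = indicator {0..1} x *
     (\<Sum>i\<in>S. push_conv Tr k H (2 * of_int i + x) + push_conv Tr k H (2 * of_int i - x))"

lemma bounded_kernel_measurable:
  "bounded_kernel k \<Longrightarrow> k \<in> borel_measurable borel"
  unfolding bounded_kernel_def by blast

lemma bounded_kernel_integrable:
  assumes "bounded_kernel k" shows "integrable lborel k"
proof -
  obtain B R where "\<And>x. \<bar>k x\<bar> \<le> B" "\<And>x. \<bar>x\<bar> > R \<Longrightarrow> k x = 0"
    using assms unfolding bounded_kernel_def by blast
  with bounded_kernel_measurable[OF assms] show ?thesis
    by (intro integrableI_bounded_set[where A="{-R..R}" and B=B])
       (auto simp: not_less emeasure_lborel_Icc_eq)
qed

lemma bounded_kernel_diff:
  assumes "bounded_kernel k1" "bounded_kernel k2"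
  shows "bounded_kernel (\<lambda>x. k1 x - k2 x)"
proof -
  obtain B1 R1 B2 R2 where B: "\<And>x. \<bar>k1 x\<bar> \<le> B1" "\<And>x. \<bar>k2 x\<bar> \<le> B2"
    and R: "\<And>x. \<bar>x\<bar> > R1 \<Longrightarrow> k1 x = 0" "\<And>x. \<bar>x\<bar> > R2 \<Longrightarrow> k2 x = 0"
    using assms unfolding bounded_kernel_def by blast
  have "\<forall>x. \<bar>k1 x - k2 x\<bar> \<le> B1 + B2" using B abs_triangle_ineq4 order_trans add_mono by metis
  moreover have "\<forall>x. \<bar>x\<bar> > max R1 R2 \<longrightarrow> k1 x - k2 x = 0" using R by auto
  moreover have "(\<lambda>x. k1 x - k2 x) \<in> borel_measurable borel"
    using assms by (intro borel_measurable_diff bounded_kernel_measurable)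
  ultimately show ?thesis unfolding bounded_kernel_def by blast
qed

lemma noise_kernel_bounded_kernel:
  assumes "noise_kernel \<rho>" shows "bounded_kernel \<rho>"
proof -
  have "integrable lborel \<rho>"
    using assms unfolding noise_kernel_def using not_integrable_integral_eq by fastforce
  then have "\<rho> \<in> borel_measurable borel" by (simp add: borel_measurable_integrable)
  moreover obtain B where B: "\<And>(n::nat) xs. (\<forall>k<n. xs k \<le> xs (Suc k)) \<Longrightarrow>
      (\<Sum>k<n. \<bar>\<rho> (xs (Suc k)) - \<rho> (xs k)\<bar>) \<le> B"
    using assms unfolding noise_kernel_def bounded_variation_def by blast
  have "\<bar>\<rho> x\<bar> \<le> \<bar>\<rho> 0\<bar> + B" for x
  proof -
    have "(\<Sum>k<1. \<bar>\<rho> ((\<lambda>k. if k = 0 then min 0 x else max 0 x) (Suc k))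
                  - \<rho> ((\<lambda>k. if k = 0 then min 0 x else max 0 x) k)\<bar>) \<le> B"
      by (rule B) auto
    then show ?thesis by (cases "0 \<le> x") (auto simp: max_def min_def)
  qed
  moreover have "\<exists>R. \<forall>x. \<bar>x\<bar> > R \<longrightarrow> \<rho> x = 0" using assms unfolding noise_kernel_def by blast
  ultimately show ?thesis unfolding bounded_kernel_def by blast
qed

lemma partition_piece_containing:
  fixes a :: "nat \<Rightarrow> real"
  assumes "a 0 = 0" "a n = 1" "0 < y" "y < 1" "y \<notin> a ` {..n}"
  obtains k where "k < n" "a k < y" "y < a (Suc k)"
proof -
  have "a m < y" if "m \<le> n" "\<not> (\<exists>k<n. a k < y \<and> y < a (Suc k))" for m
    using that
  proof (induction m)
    case (Suc m)
    then have "\<not> y < a (Suc m)" by auto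
    moreover have "a (Suc m) \<noteq> y" using assms(5) Suc.prems by (metis atMost_iff image_eqI)
    ultimately show ?case by simp
  qed (use assms in simp)
  moreover have "\<not> a n < y" using assms(2,4) by simp
  ultimately show ?thesis using that by blast
qed

lemma isCont_zero_ext:
  assumes "y \<noteq> 0" "y \<noteq> 1" and "y \<in> {0<..<1} \<Longrightarrow> isCont T y"
  shows "isCont (zero_ext T) y"
proof (cases "y \<in> {0<..<1}")
  case True
  then have "eventually (\<lambda>x. x \<in> {0<..<1}) (nhds y)" by (intro eventually_nhds_in_open) auto
  then have "eventually (\<lambda>x. zero_ext T x = T x) (nhds y)"
    by eventually_elim (simp add: zero_ext_def)
  with True assms(3) show ?thesis using isCont_cong by blast
next
  case False
  with assms(1,2) have "y \<in> - {0..1}" by auto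
  then have "eventually (\<lambda>x. x \<in> - {0..1}) (nhds y)" by (intro eventually_nhds_in_open) auto
  then have "eventually (\<lambda>x. zero_ext T x = 0) (nhds y)"
    by eventually_elim (simp add: zero_ext_def)
  then show ?thesis using isCont_cong[of "zero_ext T" "\<lambda>_. 0"] by simp
qed

lemma piecewise_smooth_maps_unit:
  "piecewise_smooth T \<Longrightarrow> y \<in> {0..1} \<Longrightarrow> T y \<in> {0..1}"
  unfolding piecewise_smooth_def by blast

lemma piecewise_smooth_zero_ext_measurable:
  assumes "piecewise_smooth T" shows "zero_ext T \<in> borel_measurable borel"
proof -
  obtain n a where a: "a 0 = (0::real)" "a n = 1"
    and C2: "\<forall>k<n. C2_on {a k<..<a (Suc k)} T"
    using assms unfolding piecewise_smooth_def by (elim conjE exE) blast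
  have "isCont (zero_ext T) y" if y: "y \<notin> a ` {..n}" for y
  proof (rule isCont_zero_ext)
    show "y \<noteq> 0" using a(1) y by (metis atMost_iff image_eqI le0)
    show "y \<noteq> 1" using a(2) y by (metis atMost_iff image_eqI order_refl)
    assume "y \<in> {0<..<1}"
    then obtain k where k: "k < n" "y \<in> {a k<..<a (Suc k)}"
      using partition_piece_containing[OF a _ _ y] by auto
    then show "isCont T y" using C2 k(1) unfolding C2_on_def by (meson DERIV_isCont)
  qed
  then have "continuous_on (- a ` {..n}) (zero_ext T)"
    by (intro continuous_at_imp_continuous_on) auto
  then show ?thesis by (rule borel_measurable_continuous_countable_exceptions[rotated]) simp
qed

context
  fixes k Tr :: "real \<Rightarrow> real"
  assumes k: "bounded_kernel k" and Tr [measurable]: "Tr \<in> borel_measurable borel"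
begin

lemma push_conv_integrand_integrable:
  assumes "integrable lborel H"
  shows "integrable lborel (\<lambda>y. k (z - Tr y) * H y)"
proof -
  obtain B where B: "\<And>x. \<bar>k x\<bar> \<le> B" using k unfolding bounded_kernel_def by blast
  have [measurable]: "k \<in> borel_measurable borel" using k by (rule bounded_kernel_measurable)
  have [measurable]: "H \<in> borel_measurable lborel" using assms by auto
  show ?thesis
  proof (rule Bochner_Integration.integrable_bound[of lborel "\<lambda>y. B * H y"])
    show "integrable lborel (\<lambda>y. B * H y)" using assms by auto
    show "(\<lambda>y. k (z - Tr y) * H y) \<in> borel_measurable lborel" by measurable
    have "0 \<le> B" using B[of 0] by linarith
    then show "AE y in lborel. norm (k (z - Tr y) * H y) \<le> norm (B * H y)"
      using B by (intro AE_I2) (simp add: abs_mult mult_right_mono)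
  qed
qed

lemma borel_measurable_push_conv:
  assumes "integrable lborel H"
  shows "push_conv Tr k H \<in> borel_measurable borel"
proof -
  have [measurable]: "k \<in> borel_measurable borel" using k by (rule bounded_kernel_measurable)
  have [measurable]: "H \<in> borel_measurable lborel" using assms by auto
  show ?thesis unfolding push_conv_def
    by (rule lborel.borel_measurable_lebesgue_integral) measurable
qed

lemma push_conv_diff:
  assumes "integrable lborel H1" "integrable lborel H2"
  shows "push_conv Tr k (\<lambda>y. H1 y - H2 y) z = push_conv Tr k H1 z - push_conv Tr k H2 z"
  using push_conv_integrand_integrable[OF assms(1)] push_conv_integrand_integrable[OF assms(2)]
  unfolding push_conv_def by (simp add: right_diff_distrib)

lemma push_conv_add:
  assumes "integrable lborel H1" "integrable lborel H2"
  shows "push_conv Tr k (\<lambda>y. H1 y + H2 y) z = push_conv Tr k H1 z + push_conv Tr k H2 z"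
  using push_conv_integrand_integrable[OF assms(1)] push_conv_integrand_integrable[OF assms(2)]
  unfolding push_conv_def by (simp add: distrib_left)

lemma push_conv_cong_AE:
  assumes "integrable lborel H1" "integrable lborel H2" "AE y in lborel. H1 y = H2 y"
  shows "push_conv Tr k H1 z = push_conv Tr k H2 z"
  unfolding push_conv_def
proof (rule integral_cong_AE)
  have [measurable]: "k \<in> borel_measurable borel" using k by (rule bounded_kernel_measurable)
  have [measurable]: "H1 \<in> borel_measurable lborel" "H2 \<in> borel_measurable lborel"
    using assms(1,2) by auto
  show "(\<lambda>y. k (z - Tr y) * H1 y) \<in> borel_measurable lborel" by measurable
  show "(\<lambda>y. k (z - Tr y) * H2 y) \<in> borel_measurable lborel" by measurable
  show "AE y in lborel. k (z - Tr y) * H1 y = k (z - Tr y) * H2 y" using assms(3) by auto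
qed

text \<open>Young's inequality \<open>\<parallel>k * Tr\<^sub>*H\<parallel>\<^sub>1 \<le> \<parallel>k\<parallel>\<^sub>1 \<parallel>H\<parallel>\<^sub>1\<close>, via Tonelli and translation invariance.\<close>
lemma nn_integral_push_conv_le:
  assumes "integrable lborel H"
  shows "(\<integral>\<^sup>+z. ennreal \<bar>push_conv Tr k H z\<bar> \<partial>lborel)
    \<le> (\<integral>\<^sup>+z. ennreal \<bar>k z\<bar> \<partial>lborel) * (\<integral>\<^sup>+y. ennreal \<bar>H y\<bar> \<partial>lborel)"
proof -
  have [measurable]: "k \<in> borel_measurable borel" using k by (rule bounded_kernel_measurable)
  have [measurable]: "H \<in> borel_measurable lborel" using assms by auto
  have "(\<integral>\<^sup>+z. ennreal \<bar>push_conv Tr k H z\<bar> \<partial>lborel)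
      \<le> (\<integral>\<^sup>+z. (\<integral>\<^sup>+y. ennreal (\<bar>k (z - Tr y)\<bar> * \<bar>H y\<bar>) \<partial>lborel) \<partial>lborel)"
    using integral_norm_bound_ennreal[OF push_conv_integrand_integrable[OF assms]]
    by (intro nn_integral_mono) (simp add: push_conv_def abs_mult)
  also have "\<dots> = (\<integral>\<^sup>+y. (\<integral>\<^sup>+z. ennreal (\<bar>k (z - Tr y)\<bar> * \<bar>H y\<bar>) \<partial>lborel) \<partial>lborel)"
    by (rule lborel_pair.Fubini'[symmetric]) measurable
  also have "\<dots> = (\<integral>\<^sup>+y. (\<integral>\<^sup>+z. ennreal \<bar>k z\<bar> \<partial>lborel) * ennreal \<bar>H y\<bar> \<partial>lborel)"
  proof (intro nn_integral_cong)
    fix y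
    have "(\<integral>\<^sup>+z. ennreal \<bar>k (z - Tr y)\<bar> \<partial>lborel) = (\<integral>\<^sup>+z. ennreal \<bar>k z\<bar> \<partial>lborel)"
      using nn_integral_real_affine[where f="\<lambda>z. ennreal \<bar>k z\<bar>" and c=1 and t="- Tr y"] by simp
    moreover have "(\<integral>\<^sup>+z. ennreal \<bar>k (z - Tr y)\<bar> * ennreal \<bar>H y\<bar> \<partial>lborel)
        = (\<integral>\<^sup>+z. ennreal \<bar>k (z - Tr y)\<bar> \<partial>lborel) * ennreal \<bar>H y\<bar>"
      by (rule nn_integral_multc) measurable
    ultimately show "(\<integral>\<^sup>+z. ennreal (\<bar>k (z - Tr y)\<bar> * \<bar>H y\<bar>) \<partial>lborel)
        = (\<integral>\<^sup>+z. ennreal \<bar>k z\<bar> \<partial>lborel) * ennreal \<bar>H y\<bar>"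
      by (simp add: ennreal_mult)
  qed
  also have "\<dots> = (\<integral>\<^sup>+z. ennreal \<bar>k z\<bar> \<partial>lborel) * (\<integral>\<^sup>+y. ennreal \<bar>H y\<bar> \<partial>lborel)"
    by (rule nn_integral_cmult) measurable
  finally show ?thesis .
qed

end

lemma push_conv_kernel_diff:
  assumes "bounded_kernel k1" "bounded_kernel k2" "Tr \<in> borel_measurable borel"
    and "integrable lborel H"
  shows "push_conv Tr (\<lambda>x. k1 x - k2 x) H z = push_conv Tr k1 H z - push_conv Tr k2 H z"
  using push_conv_integrand_integrable[OF assms(1,3,4)] push_conv_integrand_integrable[OF assms(2,3,4)]
  unfolding push_conv_def by (simp add: left_diff_distrib)

lemma push_conv_eq_0:
  assumes "\<And>y. Tr y \<in> {0..1}" "\<And>x. \<bar>x\<bar> > R \<Longrightarrow> k x = 0" "\<bar>z\<bar> > R + 1"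
  shows "push_conv Tr k H z = 0"
proof -
  have "k (z - Tr y) = 0" for y
  proof (rule assms(2))
    show "\<bar>z - Tr y\<bar> > R" using assms(1)[of y] assms(3) by auto
  qed
  then show ?thesis unfolding push_conv_def by simp
qed

lemma sum_indicator_spaced_intervals_le:
  fixes z c :: real and S :: "int set"
  shows "(\<Sum>i\<in>S. indicator {2 * of_int i + c .. 2 * of_int i + c + 1} z) \<le> (1::real)"
proof -
  have "(\<Sum>i\<in>S. indicator {2 * of_int i + c .. 2 * of_int i + c + 1} z)
      \<le> (\<Sum>i\<in>S. if i = \<lfloor>(z - c) / 2\<rfloor> then 1 else (0::real))"
  proof (rule sum_mono)
    fix i
    show "indicator {2 * of_int i + c .. 2 * of_int i + c + 1} z
        \<le> (if i = \<lfloor>(z - c) / 2\<rfloor> then 1 else (0::real))"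
    proof (cases "z \<in> {2 * of_int i + c .. 2 * of_int i + c + 1}")
      case True
      then have "\<lfloor>(z - c) / 2\<rfloor> = i" by (subst floor_eq_iff) auto
      then show ?thesis using True by simp
    qed simp
  qed
  also have "\<dots> \<le> 1" by (cases "finite S") (auto simp: sum.delta)
  finally show ?thesis .
qed

text \<open>Every point lies in at most one interval \<open>[2i, 2i+1]\<close> and one \<open>[2i-1, 2i]\<close>.\<close>
lemma sum_indicator_fold_intervals_le:
  fixes z :: real and S :: "int set"
  shows "(\<Sum>i\<in>S. indicator {2 * of_int i .. 2 * of_int i + 1} z
                 + indicator {2 * of_int i - 1 .. 2 * of_int i} z :: ennreal) \<le> 2"
proof -
  have "(\<Sum>i\<in>S. indicator {2 * of_int i .. 2 * of_int i + 1} z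
               + indicator {2 * of_int i - 1 .. 2 * of_int i} z :: ennreal)
      = ennreal (\<Sum>i\<in>S. indicator {2 * of_int i .. 2 * of_int i + 1} z
               + indicator {2 * of_int i - 1 .. 2 * of_int i} z)"
    by (simp add: ennreal_indicator[symmetric] ennreal_plus[symmetric] del: ennreal_plus)
  also have "\<dots> \<le> ennreal 2"
    using sum_indicator_spaced_intervals_le[where S=S and c=0 and z=z]
          sum_indicator_spaced_intervals_le[where S=S and c="-1" and z=z]
    by (intro ennreal_leI) (simp add: sum.distrib)
  finally show ?thesis by simp
qed

lemma nn_integral_unit_shift:
  fixes f :: "real \<Rightarrow> ennreal"
  assumes "f \<in> borel_measurable borel"
  shows "(\<integral>\<^sup>+x. indicator {0..1} x * f (t + x) \<partial>lborel) = (\<integral>\<^sup>+z. indicator {t..t+1} z * f z \<partial>lborel)"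
proof -
  have "(\<integral>\<^sup>+z. indicator {t..t+1} z * f z \<partial>lborel)
      = ennreal \<bar>1\<bar> * (\<integral>\<^sup>+x. indicator {t..t+1} (t + 1 * x) * f (t + 1 * x) \<partial>lborel)"
    by (rule nn_integral_real_affine) (use assms in auto)
  also have "\<dots> = (\<integral>\<^sup>+x. indicator {0..1} x * f (t + x) \<partial>lborel)"
    by (auto intro!: nn_integral_cong split: split_indicator)
  finally show ?thesis by simp
qed

lemma nn_integral_unit_reflect:
  fixes f :: "real \<Rightarrow> ennreal"
  assumes "f \<in> borel_measurable borel"
  shows "(\<integral>\<^sup>+x. indicator {0..1} x * f (t - x) \<partial>lborel) = (\<integral>\<^sup>+z. indicator {t-1..t} z * f z \<partial>lborel)"
proof -
  have "(\<integral>\<^sup>+z. indicator {t-1..t} z * f z \<partial>lborel)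
      = ennreal \<bar>-1\<bar> * (\<integral>\<^sup>+x. indicator {t-1..t} (t + (-1) * x) * f (t + (-1) * x) \<partial>lborel)"
    by (rule nn_integral_real_affine) (use assms in auto)
  also have "\<dots> = (\<integral>\<^sup>+x. indicator {0..1} x * f (t - x) \<partial>lborel)"
    by (auto intro!: nn_integral_cong split: split_indicator)
  finally show ?thesis by simp
qed

lemma nn_integral_fold_le:
  fixes G :: "real \<Rightarrow> ennreal"
  assumes [measurable]: "G \<in> borel_measurable borel" and "finite S"
  shows "(\<integral>\<^sup>+x. indicator {0..1} x * (\<Sum>i\<in>S. G (2 * of_int i + x) + G (2 * of_int i - x)) \<partial>lborel)
    \<le> 2 * (\<integral>\<^sup>+z. G z \<partial>lborel)"
proof -
  let ?A = "\<lambda>i::int. {2 * of_int i .. 2 * of_int i + 1 :: real}"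
  let ?B = "\<lambda>i::int. {2 * of_int i - 1 .. 2 * of_int i :: real}"
  have "(\<integral>\<^sup>+x. indicator {0..1} x * (\<Sum>i\<in>S. G (2 * of_int i + x) + G (2 * of_int i - x)) \<partial>lborel)
      = (\<Sum>i\<in>S. (\<integral>\<^sup>+x. indicator {0..1} x * G (2 * of_int i + x) \<partial>lborel)
                + (\<integral>\<^sup>+x. indicator {0..1} x * G (2 * of_int i - x) \<partial>lborel))"
    unfolding sum_distrib_left distrib_left using assms(2)
    by (subst nn_integral_sum) (auto intro!: sum.cong nn_integral_add)
  also have "\<dots> = (\<Sum>i\<in>S. (\<integral>\<^sup>+z. indicator (?A i) z * G z + indicator (?B i) z * G z \<partial>lborel))"
    by (intro sum.cong refl)
       (simp add: nn_integral_unit_shift nn_integral_unit_reflect nn_integral_add)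
  also have "\<dots> = (\<integral>\<^sup>+z. (\<Sum>i\<in>S. indicator (?A i) z + indicator (?B i) z) * G z \<partial>lborel)"
    by (subst nn_integral_sum[symmetric]) (auto simp: sum_distrib_right distrib_right)
  also have "\<dots> \<le> (\<integral>\<^sup>+z. 2 * G z \<partial>lborel)"
    by (intro nn_integral_mono mult_right_mono sum_indicator_fold_intervals_le) simp
  also have "\<dots> = 2 * (\<integral>\<^sup>+z. G z \<partial>lborel)"
    by (rule nn_integral_cmult) simp
  finally show ?thesis .
qed

lemma zero_ext_fold_transfer [simp]: "zero_ext (fold_transfer Tr S k H) = fold_transfer Tr S k H"
  unfolding zero_ext_def fold_transfer_def by (rule ext) (simp split: split_indicator)

context
  fixes k Tr :: "real \<Rightarrow> real" and S :: "int set"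
  assumes k: "bounded_kernel k" and Tr: "Tr \<in> borel_measurable borel" and S: "finite S"
begin

lemma fold_transfer_diff:
  assumes "integrable lborel H1" "integrable lborel H2"
  shows "fold_transfer Tr S k (\<lambda>y. H1 y - H2 y) x = fold_transfer Tr S k H1 x - fold_transfer Tr S k H2 x"
  unfolding fold_transfer_def push_conv_diff[OF k Tr assms] by (simp add: sum_subtractf algebra_simps)

lemma fold_transfer_add:
  assumes "integrable lborel H1" "integrable lborel H2"
  shows "fold_transfer Tr S k (\<lambda>y. H1 y + H2 y) x = fold_transfer Tr S k H1 x + fold_transfer Tr S k H2 x"
  unfolding fold_transfer_def push_conv_add[OF k Tr assms] by (simp add: sum.distrib algebra_simps)

lemma fold_transfer_cong_AE:
  assumes "integrable lborel H1" "integrable lborel H2" "AE y in lborel. H1 y = H2 y"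
  shows "fold_transfer Tr S k H1 x = fold_transfer Tr S k H2 x"
  unfolding fold_transfer_def push_conv_cong_AE[OF k Tr assms] ..

lemma nn_integral_fold_transfer_le:
  assumes "integrable lborel H"
  shows "(\<integral>\<^sup>+x. ennreal \<bar>fold_transfer Tr S k H x\<bar> \<partial>lborel)
    \<le> 2 * (\<integral>\<^sup>+z. ennreal \<bar>k z\<bar> \<partial>lborel) * (\<integral>\<^sup>+y. ennreal \<bar>H y\<bar> \<partial>lborel)"
proof -
  define G where "G z = ennreal \<bar>push_conv Tr k H z\<bar>" for z
  have [measurable]: "G \<in> borel_measurable borel"
    unfolding G_def using borel_measurable_push_conv[OF k Tr assms] by measurable
  have "ennreal \<bar>fold_transfer Tr S k H x\<bar>
      \<le> indicator {0..1} x * (\<Sum>i\<in>S. G (2 * of_int i + x) + G (2 * of_int i - x))" for x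
  proof -
    let ?P = "push_conv Tr k H"
    have "\<bar>fold_transfer Tr S k H x\<bar>
        \<le> indicator {0..1} x * (\<Sum>i\<in>S. \<bar>?P (2 * of_int i + x)\<bar> + \<bar>?P (2 * of_int i - x)\<bar>)"
      unfolding fold_transfer_def
      by (cases "x \<in> {0..1}") (simp_all add: order_trans[OF sum_abs] sum_mono abs_triangle_ineq)
    then have "ennreal \<bar>fold_transfer Tr S k H x\<bar>
        \<le> ennreal (indicator {0..1} x * (\<Sum>i\<in>S. \<bar>?P (2 * of_int i + x)\<bar> + \<bar>?P (2 * of_int i - x)\<bar>))"
      by (rule ennreal_leI)
    also have "\<dots> = indicator {0..1} x * (\<Sum>i\<in>S. G (2 * of_int i + x) + G (2 * of_int i - x))"
      unfolding G_def
      by (cases "x \<in> {0..1}") (simp_all add: sum_ennreal[symmetric] del: sum_ennreal)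
    finally show ?thesis .
  qed
  then have "(\<integral>\<^sup>+x. ennreal \<bar>fold_transfer Tr S k H x\<bar> \<partial>lborel)
      \<le> (\<integral>\<^sup>+x. indicator {0..1} x * (\<Sum>i\<in>S. G (2 * of_int i + x) + G (2 * of_int i - x)) \<partial>lborel)"
    by (rule nn_integral_mono)
  also have "\<dots> \<le> 2 * (\<integral>\<^sup>+z. G z \<partial>lborel)"
    by (rule nn_integral_fold_le) (simp_all add: S)
  also have "\<dots> \<le> 2 * ((\<integral>\<^sup>+z. ennreal \<bar>k z\<bar> \<partial>lborel) * (\<integral>\<^sup>+y. ennreal \<bar>H y\<bar> \<partial>lborel))"
    unfolding G_def by (intro mult_left_mono nn_integral_push_conv_le[OF k Tr assms]) simp
  finally show ?thesis by (simp add: mult.assoc)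
qed

lemma integrable_fold_transfer:
  assumes H: "integrable lborel H"
  shows "integrable lborel (fold_transfer Tr S k H)"
proof (rule integrableI_bounded)
  have [measurable]: "push_conv Tr k H \<in> borel_measurable borel"
    by (rule borel_measurable_push_conv[OF k Tr H])
  show "fold_transfer Tr S k H \<in> borel_measurable lborel"
    unfolding fold_transfer_def by measurable
  have "(\<integral>\<^sup>+z. ennreal (norm (k z)) \<partial>lborel) < \<infinity>"
    using bounded_kernel_integrable[OF k] integrable_iff_bounded by blast
  moreover have "(\<integral>\<^sup>+z. ennreal (norm (H z)) \<partial>lborel) < \<infinity>"
    using H integrable_iff_bounded by blast
  ultimately have "2 * (\<integral>\<^sup>+z. ennreal \<bar>k z\<bar> \<partial>lborel) * (\<integral>\<^sup>+y. ennreal \<bar>H y\<bar> \<partial>lborel) < \<infinity>"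
    by (simp add: ennreal_mult_less_top)
  then show "(\<integral>\<^sup>+x. ennreal (norm (fold_transfer Tr S k H x)) \<partial>lborel) < \<infinity>"
    using nn_integral_fold_transfer_le[OF H] by simp
qed

lemma integral_abs_fold_transfer_le:
  assumes H: "integrable lborel H"
  shows "(\<integral>x. \<bar>fold_transfer Tr S k H x\<bar> \<partial>lborel) \<le> 2 * (\<integral>z. \<bar>k z\<bar> \<partial>lborel) * (\<integral>y. \<bar>H y\<bar> \<partial>lborel)"
proof -
  have "ennreal (\<integral>x. \<bar>fold_transfer Tr S k H x\<bar> \<partial>lborel)
      \<le> 2 * ennreal (\<integral>x. \<bar>k x\<bar> \<partial>lborel) * ennreal (\<integral>x. \<bar>H x\<bar> \<partial>lborel)"
    using nn_integral_fold_transfer_le[OF H] integrable_fold_transfer[OF H]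
      bounded_kernel_integrable[OF k] H
    by (simp add: nn_integral_eq_integral)
  also have "\<dots> = ennreal (2 * (\<integral>x. \<bar>k x\<bar> \<partial>lborel) * (\<integral>x. \<bar>H x\<bar> \<partial>lborel))"
    by (simp add: ennreal_mult)
  finally show ?thesis by (subst (asm) ennreal_le_iff) auto
qed

lemma integrable_fold_transfer_pow:
  "integrable lborel H \<Longrightarrow> integrable lborel ((fold_transfer Tr S k ^^ m) H)"
  by (induction m) (auto intro: integrable_fold_transfer)

lemma fold_transfer_pow_cong_AE:
  assumes "integrable lborel H1" "integrable lborel H2" "AE x in lborel. H1 x = H2 x"
  shows "AE x in lborel. (fold_transfer Tr S k ^^ m) H1 x = (fold_transfer Tr S k ^^ m) H2 x"
proof (induction m)
  case (Suc m)
  then show ?case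
    using fold_transfer_cong_AE[OF integrable_fold_transfer_pow integrable_fold_transfer_pow]
      assms(1,2) by simp
qed (use assms(3) in simp)

lemma fold_transfer_pow_add:
  assumes "integrable lborel H1" "integrable lborel H2"
  shows "(fold_transfer Tr S k ^^ m) (\<lambda>x. H1 x + H2 x)
    = (\<lambda>x. (fold_transfer Tr S k ^^ m) H1 x + (fold_transfer Tr S k ^^ m) H2 x)"
proof (induction m)
  case (Suc m)
  show ?case
    by (rule ext) (simp add: Suc fold_transfer_add[OF integrable_fold_transfer_pow integrable_fold_transfer_pow] assms)
qed simp

lemma integral_abs_fold_transfer_pow_le:
  assumes H: "integrable lborel H"
  shows "(\<integral>x. \<bar>(fold_transfer Tr S k ^^ m) H x\<bar> \<partial>lborel)
    \<le> (2 * (\<integral>z. \<bar>k z\<bar> \<partial>lborel)) ^ m * (\<integral>x. \<bar>H x\<bar> \<partial>lborel)"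
proof (induction m)
  case (Suc m)
  have "(\<integral>x. \<bar>(fold_transfer Tr S k ^^ Suc m) H x\<bar> \<partial>lborel)
      \<le> 2 * (\<integral>z. \<bar>k z\<bar> \<partial>lborel) * (\<integral>x. \<bar>(fold_transfer Tr S k ^^ m) H x\<bar> \<partial>lborel)"
    using integral_abs_fold_transfer_le[OF integrable_fold_transfer_pow[OF H]] by simp
  also have "\<dots> \<le> 2 * (\<integral>z. \<bar>k z\<bar> \<partial>lborel) * ((2 * (\<integral>z. \<bar>k z\<bar> \<partial>lborel)) ^ m * (\<integral>x. \<bar>H x\<bar> \<partial>lborel))"
    by (intro mult_left_mono Suc) auto
  finally show ?case by (simp add: mult.assoc)
qed simp

lemma fold_transfer_pow_telescope:
  assumes H: "integrable lborel H" and G: "integrable lborel G"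
    and eq: "AE x in lborel. H x = fold_transfer Tr S k H x + G x"
  shows "AE x in lborel. H x = (fold_transfer Tr S k ^^ m) H x + (\<Sum>j<m. (fold_transfer Tr S k ^^ j) G x)"
proof (induction m)
  case (Suc m)
  let ?A = "fold_transfer Tr S k"
  have AH: "integrable lborel (?A H)" by (rule integrable_fold_transfer[OF H])
  have "AE x in lborel. (?A ^^ m) H x = (?A ^^ m) (\<lambda>x. ?A H x + G x) x"
    using AH G H eq by (intro fold_transfer_pow_cong_AE) auto
  moreover have "(?A ^^ m) (\<lambda>x. ?A H x + G x) x = (?A ^^ Suc m) H x + (?A ^^ m) G x" for x
    by (simp only: fold_transfer_pow_add[OF AH G] funpow_Suc_right o_apply)
  ultimately show ?case
    using Suc by (auto elim: eventually_mono)
qed simp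

end

lemma fold_transfer_kernel_diff:
  assumes "bounded_kernel k1" "bounded_kernel k2" "Tr \<in> borel_measurable borel"
    and "integrable lborel H"
  shows "fold_transfer Tr S (\<lambda>x. k1 x - k2 x) H x = fold_transfer Tr S k1 H x - fold_transfer Tr S k2 H x"
  unfolding fold_transfer_def push_conv_kernel_diff[OF assms] by (simp add: sum_subtractf algebra_simps)

lemma integral_abs_le_telescope:
  assumes k: "bounded_kernel k" and Tr: "Tr \<in> borel_measurable borel" and S: "finite S"
    and H: "integrable lborel H" and G: "integrable lborel G"
    and eq: "AE x in lborel. H x = fold_transfer Tr S k H x + G x"
  shows "(\<integral>x. \<bar>H x\<bar> \<partial>lborel) \<le> (\<integral>x. \<bar>(fold_transfer Tr S k ^^ m) H x\<bar> \<partial>lborel)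
           + (\<Sum>j<m. (2 * (\<integral>z. \<bar>k z\<bar> \<partial>lborel)) ^ j) * (\<integral>x. \<bar>G x\<bar> \<partial>lborel)"
proof -
  let ?A = "fold_transfer Tr S k"
  have iAH: "integrable lborel ((?A ^^ m) H)" and iAG: "\<And>j. integrable lborel ((?A ^^ j) G)"
    using integrable_fold_transfer_pow[OF k Tr S] H G by auto
  have "(\<integral>x. \<bar>H x\<bar> \<partial>lborel) = (\<integral>x. \<bar>(?A ^^ m) H x + (\<Sum>j<m. (?A ^^ j) G x)\<bar> \<partial>lborel)"
    using fold_transfer_pow_telescope[OF k Tr S H G eq, of m]
    by (intro integral_cong_AE) (use H iAH iAG in auto)
  also have "\<dots> \<le> (\<integral>x. \<bar>(?A ^^ m) H x\<bar> + (\<Sum>j<m. \<bar>(?A ^^ j) G x\<bar>) \<partial>lborel)"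
    by (intro integral_mono add_left_mono sum_abs order_trans[OF abs_triangle_ineq])
       (use iAH iAG in auto)
  also have "\<dots> = (\<integral>x. \<bar>(?A ^^ m) H x\<bar> \<partial>lborel) + (\<Sum>j<m. \<integral>x. \<bar>(?A ^^ j) G x\<bar> \<partial>lborel)"
    using iAH iAG by (simp add: Bochner_Integration.integral_sum)
  also have "\<dots> \<le> (\<integral>x. \<bar>(?A ^^ m) H x\<bar> \<partial>lborel)
      + (\<Sum>j<m. (2 * (\<integral>z. \<bar>k z\<bar> \<partial>lborel)) ^ j * (\<integral>x. \<bar>G x\<bar> \<partial>lborel))"
    by (intro add_left_mono sum_mono integral_abs_fold_transfer_pow_le[OF k Tr S G])
  finally show ?thesis by (simp add: sum_distrib_right)
qed

text \<open>If \<open>F\<^sub>1, F\<^sub>2\<close> are fixed by the operators with kernels \<open>k\<^sub>1, k\<^sub>2\<close>, then \<open>H = F\<^sub>2 - F\<^sub>1\<close>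
  satisfies \<open>H = A\<^sub>1 H + (A\<^sub>2 - A\<^sub>1) F\<^sub>2\<close>, and the perturbation term is linear in \<open>k\<^sub>2 - k\<^sub>1\<close>.\<close>
lemma fold_transfer_fixed_points_diff_le:
  assumes k1: "bounded_kernel k1" and k2: "bounded_kernel k2"
    and Tr: "Tr \<in> borel_measurable borel" and S: "finite S"
    and F1: "integrable lborel F1" and F2: "integrable lborel F2"
    and fix1: "AE x in lborel. fold_transfer Tr S k1 F1 x = F1 x"
    and fix2: "AE x in lborel. fold_transfer Tr S k2 F2 x = F2 x"
  shows "(\<integral>x. \<bar>F2 x - F1 x\<bar> \<partial>lborel)
    \<le> (\<integral>x. \<bar>(fold_transfer Tr S k1 ^^ m) (\<lambda>x. F2 x - F1 x) x\<bar> \<partial>lborel)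
      + (\<Sum>j<m. (2 * (\<integral>z. \<bar>k1 z\<bar> \<partial>lborel)) ^ j) * (2 * (\<integral>z. \<bar>k1 z - k2 z\<bar> \<partial>lborel) * (\<integral>x. \<bar>F2 x\<bar> \<partial>lborel))"
proof -
  define G where "G = fold_transfer Tr S (\<lambda>x. k2 x - k1 x) F2"
  have kd: "bounded_kernel (\<lambda>x. k2 x - k1 x)" by (rule bounded_kernel_diff[OF k2 k1])
  have H: "integrable lborel (\<lambda>x. F2 x - F1 x)" using F1 F2 by simp
  have G: "integrable lborel G" unfolding G_def by (rule integrable_fold_transfer[OF kd Tr S F2])
  have "AE x in lborel. F2 x - F1 x = fold_transfer Tr S k1 (\<lambda>x. F2 x - F1 x) x + G x"
    using fix1 fix2 by eventually_elim
      (simp add: G_def fold_transfer_diff[OF k1 Tr S F2 F1] fold_transfer_kernel_diff[OF k2 k1 Tr F2])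
  then have "(\<integral>x. \<bar>F2 x - F1 x\<bar> \<partial>lborel)
      \<le> (\<integral>x. \<bar>(fold_transfer Tr S k1 ^^ m) (\<lambda>x. F2 x - F1 x) x\<bar> \<partial>lborel)
        + (\<Sum>j<m. (2 * (\<integral>z. \<bar>k1 z\<bar> \<partial>lborel)) ^ j) * (\<integral>x. \<bar>G x\<bar> \<partial>lborel)"
    by (rule integral_abs_le_telescope[OF k1 Tr S H G])
  also have "(\<integral>x. \<bar>G x\<bar> \<partial>lborel) \<le> 2 * (\<integral>z. \<bar>k1 z - k2 z\<bar> \<partial>lborel) * (\<integral>x. \<bar>F2 x\<bar> \<partial>lborel)"
    using integral_abs_fold_transfer_le[OF kd Tr S F2] unfolding G_def by (simp add: abs_minus_commute)
  finally show ?thesis by (simp add: mult_left_mono sum_nonneg)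
qed

lemma conv_push_eq_push_conv: "conv_push k T h z = push_conv (zero_ext T) k (zero_ext h) z"
  unfolding conv_push_def push_conv_def set_lebesgue_integral_def zero_ext_def
  by (intro Bochner_Integration.integral_cong) (auto split: split_indicator)

lemma transfer_eq_fold_transfer:
  fixes N :: int
  assumes T: "\<And>y. y \<in> {0..1} \<Longrightarrow> T y \<in> {0..1}"
    and R: "\<And>x. \<bar>x\<bar> > R \<Longrightarrow> k x = 0" and "0 \<le> R" and N: "R + 2 \<le> of_int N"
  shows "transfer k T h = fold_transfer (zero_ext T) {-N..N} k (zero_ext h)"
proof
  fix x
  let ?P = "push_conv (zero_ext T) k (zero_ext h)"
  define F where "F i = ?P (2 * of_int i + x) + ?P (2 * of_int i - x)" for i :: int
  have T': "zero_ext T y \<in> {0..1}" for y using T[of y] by (simp add: zero_ext_def split: split_indicator)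
  show "transfer k T h x = fold_transfer (zero_ext T) {-N..N} k (zero_ext h) x"
  proof (cases "x \<in> {0..1}")
    case True
    have "F i = 0" if "i \<notin> {-N..N}" for i
    proof -
      have "\<bar>real_of_int i\<bar> \<ge> real_of_int N + 1" using that by auto
      then have "\<bar>2 * of_int i + x\<bar> > R + 1" "\<bar>2 * of_int i - x\<bar> > R + 1"
        using True N \<open>0 \<le> R\<close> by auto
      then show ?thesis unfolding F_def using push_conv_eq_0[OF T' R] by simp
    qed
    then have "(\<Sum>\<^sub>\<infinity>i. F i) = (\<Sum>i\<in>{-N..N}. F i)"
      by (subst infsum_cong_neutral[where T="{-N..N}" and g=F]) auto
    then show ?thesis
      unfolding transfer_def fold_transfer_def F_def conv_push_eq_push_conv using True by simp
  next
    case False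
    then show ?thesis by (auto simp: transfer_def fold_transfer_def)
  qed
qed

lemma transfer_pair_eq_fold_transfer:
  assumes "piecewise_smooth T" "bounded_kernel k1" "bounded_kernel k2"
  obtains S where "finite S"
    and "\<And>h. transfer k1 T h = fold_transfer (zero_ext T) S k1 (zero_ext h)"
    and "\<And>h. transfer k2 T h = fold_transfer (zero_ext T) S k2 (zero_ext h)"
proof -
  obtain R1 R2 where R: "\<And>x. \<bar>x\<bar> > R1 \<Longrightarrow> k1 x = 0" "\<And>x. \<bar>x\<bar> > R2 \<Longrightarrow> k2 x = 0"
    using assms(2,3) unfolding bounded_kernel_def by blast
  define R where "R = max (max R1 R2) 0"
  define N where "N = \<lceil>R\<rceil> + 2"
  have "R + 2 \<le> of_int N" unfolding N_def using le_of_int_ceiling[of R] by simp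
  moreover have "0 \<le> R" unfolding R_def by simp
  ultimately show ?thesis
    using that[of "{-N..N}"] transfer_eq_fold_transfer piecewise_smooth_maps_unit[OF assms(1)] R
    unfolding R_def by (metis finite_atLeastAtMost_int max.strict_boundedE)
qed

lemma zero_ext_transfer_pow:
  assumes "\<And>h. transfer k T h = fold_transfer Tr S k (zero_ext h)"
  shows "zero_ext ((transfer k T ^^ m) h) = (fold_transfer Tr S k ^^ m) (zero_ext h)"
  by (induction m) (simp_all add: assms)

lemma L1norm_eq_integral_zero_ext: "L1norm f = (\<integral>x. \<bar>zero_ext f x\<bar> \<partial>lborel)"
  unfolding L1norm_def set_lebesgue_integral_def zero_ext_def
  by (intro Bochner_Integration.integral_cong) (auto simp: abs_mult split: split_indicator)

lemma stationary_integrable: "stationary \<rho> T f \<Longrightarrow> integrable lborel (zero_ext f)"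
  unfolding stationary_def set_integrable_def zero_ext_def by simp

lemma stationary_L1norm:
  assumes st: "stationary \<rho> T f" shows "(\<integral>x. \<bar>zero_ext f x\<bar> \<partial>lborel) = 1"
proof -
  have "AE x in lborel. \<bar>zero_ext f x\<bar> = zero_ext f x"
    using st unfolding stationary_def
    by (auto elim!: eventually_mono simp: zero_ext_def split: split_indicator)
  then have "(\<integral>x. \<bar>zero_ext f x\<bar> \<partial>lborel) = (\<integral>x. zero_ext f x \<partial>lborel)"
    using stationary_integrable[OF st] by (intro integral_cong_AE) auto
  also have "\<dots> = 1" using st unfolding stationary_def set_lebesgue_integral_def zero_ext_def by simp
  finally show ?thesis .
qed

lemma stationary_fixed_AE:
  assumes "stationary \<rho> T f" "\<And>h. transfer \<rho> T h = fold_transfer Tr S \<rho> (zero_ext h)"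
  shows "AE x in lborel. fold_transfer Tr S \<rho> (zero_ext f) x = zero_ext f x"
  using assms(1) unfolding stationary_def
  by (auto elim!: eventually_mono simp: assms(2)[symmetric] zero_ext_def transfer_def
      split: split_indicator)

lemma stationary_diff_in_V:
  "stationary \<rho>1 T f1 \<Longrightarrow> stationary \<rho>2 T f2 \<Longrightarrow> in_V (\<lambda>x. f2 x - f1 x)"
  unfolding in_V_def stationary_def by auto

lemma L1norm_stationary_diff_le:
  assumes T: "piecewise_smooth T" and k1: "bounded_kernel \<rho>1" and k2: "bounded_kernel \<rho>2"
    and st1: "stationary \<rho>1 T f1" and st2: "stationary \<rho>2 T f2"
  shows "L1norm (\<lambda>x. f2 x - f1 x) \<le> L1norm ((transfer \<rho>1 T ^^ m) (\<lambda>x. f2 x - f1 x))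
      + 2 * (\<Sum>j<m. (2 * (\<integral>z. \<bar>\<rho>1 z\<bar> \<partial>lborel)) ^ j) * (\<integral>z. \<bar>\<rho>1 z - \<rho>2 z\<bar> \<partial>lborel)"
proof -
  obtain S where S: "finite S"
    and tr1: "\<And>h. transfer \<rho>1 T h = fold_transfer (zero_ext T) S \<rho>1 (zero_ext h)"
    and tr2: "\<And>h. transfer \<rho>2 T h = fold_transfer (zero_ext T) S \<rho>2 (zero_ext h)"
    using transfer_pair_eq_fold_transfer[OF T k1 k2] by blast
  have "zero_ext (\<lambda>x. f2 x - f1 x) = (\<lambda>x. zero_ext f2 x - zero_ext f1 x)"
    by (simp add: zero_ext_def fun_eq_iff algebra_simps)
  moreover note fold_transfer_fixed_points_diff_le[OF k1 k2 piecewise_smooth_zero_ext_measurable[OF T] S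
      stationary_integrable[OF st1] stationary_integrable[OF st2]
      stationary_fixed_AE[OF st1 tr1] stationary_fixed_AE[OF st2 tr2], of m]
  ultimately show ?thesis
    unfolding L1norm_eq_integral_zero_ext zero_ext_transfer_pow[OF tr1] stationary_L1norm[OF st2]
    by (simp add: mult_ac)
qed

theorem theorem37:
  fixes T \<rho>1 :: "real \<Rightarrow> real" and i :: nat
  assumes "piecewise_smooth T" and "noise_kernel \<rho>1"
    and "\<exists>c<1. \<forall>\<nu>. in_V \<nu> \<longrightarrow> L1norm ((transfer \<rho>1 T ^^ i) \<nu>) \<le> c * L1norm \<nu>"
  shows "\<exists>C>0. \<forall>\<rho>2 f1 f2. noise_kernel \<rho>2 \<longrightarrow> stationary \<rho>1 T f1 \<longrightarrow> stationary \<rho>2 T f2 \<longrightarrow>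
           L1norm (\<lambda>x. f2 x - f1 x) \<le> C * (LINT x|lborel. \<bar>\<rho>1 x - \<rho>2 x\<bar>)"
proof -
  obtain c where c: "c < 1"
    and contr: "\<And>\<nu>. in_V \<nu> \<Longrightarrow> L1norm ((transfer \<rho>1 T ^^ i) \<nu>) \<le> c * L1norm \<nu>"
    using assms(3) by blast
  have k1: "bounded_kernel \<rho>1" using assms(2) by (rule noise_kernel_bounded_kernel)
  define K where "K = 2 * (\<Sum>j<i. (2 * (\<integral>z. \<bar>\<rho>1 z\<bar> \<partial>lborel)) ^ j)"
  have "0 \<le> K / (1 - c)" unfolding K_def using c by (simp add: sum_nonneg)
  show ?thesis
  proof (intro exI[of _ "K / (1 - c) + 1"] conjI allI impI)
    show "0 < K / (1 - c) + 1" using \<open>0 \<le> K / (1 - c)\<close> by linarith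
    fix \<rho>2 f1 f2
    assume k2: "noise_kernel \<rho>2" and st1: "stationary \<rho>1 T f1" and st2: "stationary \<rho>2 T f2"
    let ?V = "L1norm (\<lambda>x. f2 x - f1 x)" and ?D = "LINT x|lborel. \<bar>\<rho>1 x - \<rho>2 x\<bar>"
    have "?V \<le> c * ?V + K * ?D"
      using L1norm_stationary_diff_le[OF assms(1) k1 noise_kernel_bounded_kernel[OF k2] st1 st2, of i]
        contr[OF stationary_diff_in_V[OF st1 st2]]
      unfolding K_def by (simp add: mult_ac)
    then have "?V \<le> K / (1 - c) * ?D" using c by (simp add: field_simps)
    also have "\<dots> \<le> (K / (1 - c) + 1) * ?D" by (intro mult_right_mono) auto
    finally show "?V \<le> (K / (1 - c) + 1) * ?D" .
  qed
qed

end
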